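(* Every topological pseudovector (Abelian) group which is metrizable as a topological space admits a subnorm inducing its topology.
   Context: A pseudovector group is a triple $(G,+,* )$ where $(G,+)$ is an Abelian group and $*\colon[0,\infty)\times G\to G$ is an action with $0*x=0$, $1*x=x$, $(st)*x=s*(t*x)$ for all $s,t\geqslant0$, $x\in G$, and $x\mapsto t*x$ a group homomorphism for each $t\geqslant0$. A topological pseudovector group is such a $G$ with a topology making $(G,+)$ a topological group and $*$ continuous. A value on $G$ is $p\colon G\to[0,\infty)$ with $p(x)=0\iff x=0$, $p(-x)=p(x)$, $p(x+y)\leqslant p(x)+p(y)$; it induces the metric $p(x-y)$. A subnorm is a value $\|\cdot\|$ with $\|t*x\|\leqslant\max(t,1)\|x\|$ for all $t\geqslant0$, $x\in G$. *)

theory Defs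
  imports "HOL-Analysis.Analysis"
begin

text \<open>The action of [0,\<infinity>) is a function act :: real \<Rightarrow> 'a \<Rightarrow> 'a;
  only its values for t \<ge> 0 are relevant.\<close>

definition pseudovector_action :: "(real \<Rightarrow> 'a::ab_group_add \<Rightarrow> 'a) \<Rightarrow> bool" where
  "pseudovector_action act \<longleftrightarrow>
     (\<forall>x. act 0 x = 0) \<and> (\<forall>x. act 1 x = x) \<and>
     (\<forall>s t x. s \<ge> 0 \<longrightarrow> t \<ge> 0 \<longrightarrow> act (s * t) x = act s (act t x)) \<and>
     (\<forall>t x y. t \<ge> 0 \<longrightarrow> act t (x + y) = act t x + act t y)"

definition topological_pseudovector_action ::
    "(real \<Rightarrow> 'a::topological_ab_group_add \<Rightarrow> 'a) \<Rightarrow> bool" where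
  "topological_pseudovector_action act \<longleftrightarrow>
     pseudovector_action act \<and>
     continuous_on ({0..} \<times> UNIV) (\<lambda>p. act (fst p) (snd p))"

definition is_value :: "('a::ab_group_add \<Rightarrow> real) \<Rightarrow> bool" where
  "is_value p \<longleftrightarrow>
     (\<forall>x. p x \<ge> 0) \<and> (\<forall>x. p x = 0 \<longleftrightarrow> x = 0) \<and> (\<forall>x. p (- x) = p x) \<and>
     (\<forall>x y. p (x + y) \<le> p x + p y)"

definition is_subnorm :: "(real \<Rightarrow> 'a::ab_group_add \<Rightarrow> 'a) \<Rightarrow> ('a \<Rightarrow> real) \<Rightarrow> bool" where
  "is_subnorm act nrm \<longleftrightarrow>
     is_value nrm \<and> (\<forall>t x. t \<ge> 0 \<longrightarrow> nrm (act t x) \<le> max t 1 * nrm x)"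

definition value_metric :: "('a::ab_group_add \<Rightarrow> real) \<Rightarrow> 'a \<Rightarrow> 'a \<Rightarrow> real" where
  "value_metric p x y = p (x - y)"

end

theory Submission
  imports Defs
begin

text \<open>Metrizability gives a countable neighbourhood base at 0, from which one extracts open
  symmetric neighbourhoods U 0 = UNIV \<supseteq> U 1 \<supseteq> ... with U (n+1) + U (n+1) \<subseteq> U n, forming
  a base at 0 with intersection {0}. As in the Birkhoff-Kakutani theorem, the infimum p x of
  2^-n_1 + ... + 2^-n_k over all decompositions x = y_1 + ... + y_k with y_i \<in> U n_i is a
  value bounded by 1 inducing the topology; the key point is that elements whose dyadic
  weights add up to at most 2^-n sum to an element of U n. Then
  N x = sup_{t \<ge> 0} p (t * x) / max t 1 is a subnorm dominating p. By continuity of the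
  action and the tube lemma, p (t * x) is uniformly small for t in a compact range [0, T] and x
  near 0, while for t > T the factor 1 / max t 1 makes the quotient small; hence N is small
  near 0 and induces the same topology as p.\<close>

lemma dyadic_subsum_exact:
  fixes e :: "'b \<Rightarrow> nat"
  assumes "finite I" "\<forall>i\<in>I. m \<le> e i \<and> e i \<le> m + d" "(1/2::real)^m \<le> (\<Sum>i\<in>I. (1/2)^(e i))"
  shows "\<exists>J\<subseteq>I. (\<Sum>i\<in>J. (1/2::real)^(e i)) = (1/2)^m"
  using assms
proof (induction d arbitrary: I m)
  case 0
  then obtain i where "i \<in> I" by (fastforce simp: power_le_zero_eq)
  with 0 show ?case by (intro exI[of _ "{i}"]) auto
next
  case (Suc d)
  show ?case
  proof (cases "\<exists>i\<in>I. e i = m")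
    case True
    then obtain i where "i \<in> I" "e i = m" by blast
    then show ?thesis by (intro exI[of _ "{i}"]) auto
  next
    case False
    with Suc.prems have range: "\<forall>i\<in>I'. Suc m \<le> e i \<and> e i \<le> Suc m + d" if "I' \<subseteq> I" for I'
      using that by force
    \<comment> \<open>Half of the target is reached twice, by disjoint subsets.\<close>
    have "(1/2::real)^(Suc m) \<le> (\<Sum>i\<in>I. (1/2)^(e i))"
      using Suc.prems(3) power_decreasing[of m "Suc m" "1/2::real"] by linarith
    then obtain J1 where J1: "J1 \<subseteq> I" "(\<Sum>i\<in>J1. (1/2::real)^(e i)) = (1/2)^(Suc m)"
      using Suc.IH[OF Suc.prems(1) range] by blast
    have "(\<Sum>i\<in>I - J1. (1/2::real)^(e i)) = (\<Sum>i\<in>I. (1/2)^(e i)) - (1/2)^(Suc m)"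
      by (simp only: sum_diff[OF Suc.prems(1) J1(1)] J1(2))
    then have "(1/2::real)^(Suc m) \<le> (\<Sum>i\<in>I - J1. (1/2)^(e i))"
      using Suc.prems(3) by simp
    then obtain J2 where J2: "J2 \<subseteq> I - J1" "(\<Sum>i\<in>J2. (1/2::real)^(e i)) = (1/2)^(Suc m)"
      using Suc.IH[of "I - J1"] Suc.prems(1) range[of "I - J1"] by blast
    have "finite J1" "finite J2" using J1(1) J2(1) Suc.prems(1) by (auto intro: finite_subset)
    then have "(\<Sum>i\<in>J1 \<union> J2. (1/2::real)^(e i)) = (1/2)^m"
      using J1(2) J2 by (subst sum.union_disjoint) auto
    then show ?thesis using J1(1) J2(1) by (intro exI[of _ "J1 \<union> J2"]) auto
  qed
qed

lemma dyadic_bracket: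
  fixes s :: real
  assumes "0 < s" "s \<le> (1/2)^n"
  obtains m where "n \<le> m" "(1/2)^(Suc m) < s" "s \<le> (1/2)^m"
proof -
  obtain k where k: "(1/2::real)^k < s" using real_arch_pow_inv[OF assms(1), of "1/2"] by auto
  have "m < k" if "s \<le> (1/2)^m" for m
  proof -
    have "(1/2::real)^k < (1/2)^m" using k that by linarith
    then show ?thesis by (simp add: power_strict_decreasing_iff)
  qed
  then obtain m where m: "s \<le> (1/2)^m" "\<forall>m'. s \<le> (1/2)^m' \<longrightarrow> m' \<le> m"
    using ex_has_greatest_nat[of "\<lambda>m. s \<le> (1/2)^m" n id k] assms(2) by auto
  have "n \<le> m" using m(2) assms(2) by blast
  moreover have "(1/2)^(Suc m) < s"
    using m(2)[rule_format, of "Suc m"] by (metis Suc_n_not_le_n not_le)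
  ultimately show ?thesis using m(1) by (rule that)
qed

lemma dyadic_sum_split:
  fixes e :: "'b \<Rightarrow> nat"
  assumes I: "finite I" "2 \<le> card I" and s: "(\<Sum>i\<in>I. (1/2::real)^(e i)) \<le> (1/2)^n"
  obtains m J where "n \<le> m" "J \<subset> I" "J \<noteq> {}"
    "(\<Sum>i\<in>J. (1/2::real)^(e i)) \<le> (1/2)^(Suc m)" "(\<Sum>i\<in>I - J. (1/2::real)^(e i)) \<le> (1/2)^(Suc m)"
proof -
  define s where "s = (\<Sum>i\<in>I. (1/2::real)^(e i))"
  have "I \<noteq> {}" using I by auto
  then have "0 < s" unfolding s_def using I(1) by (intro sum_pos) auto
  then obtain m where m: "n \<le> m" "(1/2)^(Suc m) < s" "s \<le> (1/2)^m"
    using dyadic_bracket s s_def by blast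
  have term_less: "(1/2::real)^(e i) < s" if "i \<in> I" for i
  proof -
    obtain j where j: "j \<in> I" "j \<noteq> i"
      using I that by (metis card_le_Suc0_iff_eq not_less_eq_eq numeral_2_eq_2)
    have "(\<Sum>l\<in>{i,j}. (1/2::real)^(e l)) \<le> s"
      unfolding s_def using that j I(1) by (intro sum_mono2) auto
    then have "(1/2::real)^(e i) + (1/2)^(e j) \<le> s" using j by simp
    moreover have "(0::real) < (1/2)^(e j)" by simp
    ultimately show ?thesis by linarith
  qed
  have "\<forall>i\<in>I. Suc m \<le> e i \<and> e i \<le> Suc m + Max (e ` I)"
  proof
    fix i assume i: "i \<in> I"
    have "(1/2::real)^(e i) < (1/2)^m" using term_less[OF i] m(3) by linarith
    moreover have "e i \<le> Max (e ` I)" using i I(1) by simp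
    ultimately show "Suc m \<le> e i \<and> e i \<le> Suc m + Max (e ` I)"
      by (simp add: power_strict_decreasing_iff Suc_le_eq)
  qed
  then obtain J where J: "J \<subseteq> I" "(\<Sum>i\<in>J. (1/2::real)^(e i)) = (1/2)^(Suc m)"
    using dyadic_subsum_exact[OF I(1)] m(2) s_def by (metis less_eq_real_def)
  moreover have "J \<noteq> I" using J(2) m(2) s_def by auto
  moreover have "J \<noteq> {}" using J(2) by auto
  moreover have "(\<Sum>i\<in>I - J. (1/2::real)^(e i)) = s - (1/2)^(Suc m)"
    unfolding s_def by (simp only: sum_diff[OF I(1) J(1)] J(2))
  ultimately show ?thesis using m that[of m J] by auto
qed

locale halving_chain =
  fixes U :: "nat \<Rightarrow> 'a::ab_group_add set"
  assumes U_0: "U 0 = UNIV"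
    and zero_mem: "\<And>n. 0 \<in> U n"
    and uminus_mem: "\<And>n x. x \<in> U n \<Longrightarrow> - x \<in> U n"
    and add_mem: "\<And>n x y. x \<in> U (Suc n) \<Longrightarrow> y \<in> U (Suc n) \<Longrightarrow> x + y \<in> U n"
begin

lemma antimono: "n \<le> m \<Longrightarrow> U m \<subseteq> U n"
proof (induction m rule: dec_induct)
  case (step m)
  then show ?case using add_mem[of _ m 0] zero_mem by fastforce
qed simp

lemma sum_mem:
  assumes "finite I" "\<forall>i\<in>I. x i \<in> U (e i)" "(\<Sum>i\<in>I. (1/2::real)^(e i)) \<le> (1/2)^n"
  shows "sum x I \<in> U n"
  using assms
proof (induction "card I" arbitrary: I n rule: less_induct)
  case less
  show ?case
  proof (cases "2 \<le> card I")
    case True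
    obtain m J where m: "n \<le> m" and J: "J \<subset> I" "J \<noteq> {}"
      and sums: "(\<Sum>i\<in>J. (1/2::real)^(e i)) \<le> (1/2)^(Suc m)"
        "(\<Sum>i\<in>I - J. (1/2::real)^(e i)) \<le> (1/2)^(Suc m)"
      using dyadic_sum_split[OF less.prems(1) True less.prems(3)] by blast
    have "finite J" using J(1) less.prems(1) finite_subset by blast
    then have "card J < card I" "card (I - J) < card I"
      using J less.prems(1) by (auto intro: psubset_card_mono)
    then have "sum x J \<in> U (Suc m)" "sum x (I - J) \<in> U (Suc m)"
      using less.hyps[of J "Suc m"] less.hyps[of "I - J" "Suc m"] sums less.prems(1,2) J(1)
        \<open>finite J\<close> by auto
    then have "sum x J + sum x (I - J) \<in> U m" by (rule add_mem)
    moreover have "sum x I = sum x J + sum x (I - J)"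
      using sum.subset_diff[of J I x] J(1) less.prems(1) by (simp add: add.commute)
    ultimately show ?thesis using antimono[OF m] by auto
  next
    case False
    then have "card I = 0 \<or> card I = 1" by linarith
    then consider "I = {}" | i where "I = {i}"
      using less.prems(1) by (auto simp: card_1_singleton_iff)
    then show ?thesis
    proof cases
      case 2
      then have "n \<le> e i" using less.prems(3) by (simp add: power_decreasing_iff)
      then show ?thesis using 2 less.prems(2) antimono by auto
    qed (simp add: zero_mem)
  qed
qed

definition dyadic_repr :: "'a \<Rightarrow> real \<Rightarrow> bool" where
  "dyadic_repr x s \<longleftrightarrow> (\<exists>xs. (\<forall>p\<in>set xs. fst p \<in> U (snd p)) \<and> x = sum_list (map fst xs) \<and>
      s = sum_list (map (\<lambda>p. (1/2::real)^(snd p)) xs))"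

definition chain_value :: "'a \<Rightarrow> real" where
  "chain_value x = Inf {s. dyadic_repr x s}"

lemma dyadic_repr_nonneg: "dyadic_repr x s \<Longrightarrow> 0 \<le> s"
  unfolding dyadic_repr_def by (auto intro!: sum_list_nonneg)

lemma dyadic_repr_mem: "x \<in> U n \<Longrightarrow> dyadic_repr x ((1/2)^n)"
  unfolding dyadic_repr_def by (intro exI[of _ "[(x, n)]"]) auto

lemma dyadic_repr_one: "dyadic_repr x 1"
  using dyadic_repr_mem[of x 0] U_0 by simp

lemma dyadic_repr_zero: "dyadic_repr 0 0"
  unfolding dyadic_repr_def by (intro exI[of _ "[]"]) auto

lemma dyadic_repr_uminus: "dyadic_repr x s \<Longrightarrow> dyadic_repr (- x) s"
  unfolding dyadic_repr_def
  by (elim exE, rule_tac x = "map (\<lambda>p. (- fst p, snd p)) xs" in exI)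
     (auto simp: uminus_sum_list_map comp_def uminus_mem)

lemma dyadic_repr_add: "dyadic_repr x s \<Longrightarrow> dyadic_repr y t \<Longrightarrow> dyadic_repr (x + y) (s + t)"
  unfolding dyadic_repr_def by (elim exE, rule_tac x = "xs @ xsa" in exI) auto

lemma dyadic_repr_small: "dyadic_repr x s \<Longrightarrow> s \<le> (1/2)^n \<Longrightarrow> x \<in> U n"
  unfolding dyadic_repr_def
proof (elim exE conjE)
  fix xs :: "('a \<times> nat) list"
  assume "\<forall>p\<in>set xs. fst p \<in> U (snd p)" "x = sum_list (map fst xs)"
    "s = sum_list (map (\<lambda>p. (1/2::real)^(snd p)) xs)" "s \<le> (1/2)^n"
  then show "x \<in> U n"
    using sum_mem[of "{..<length xs}" "\<lambda>i. fst (xs ! i)" "\<lambda>i. snd (xs ! i)" n]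
    by (force simp: sum_list_sum_nth atLeast0LessThan dest: nth_mem)
qed

lemma dyadic_repr_nonempty: "{s. dyadic_repr x s} \<noteq> {}"
  and dyadic_repr_bdd_below: "bdd_below {s. dyadic_repr x s}"
  using dyadic_repr_one dyadic_repr_nonneg by (auto intro!: bdd_belowI)

lemma chain_value_le: "dyadic_repr x s \<Longrightarrow> chain_value x \<le> s"
  unfolding chain_value_def by (rule cInf_lower) (use dyadic_repr_bdd_below in auto)

lemma chain_value_nonneg: "0 \<le> chain_value x"
  unfolding chain_value_def using dyadic_repr_nonempty
  by (rule cInf_greatest) (auto intro: dyadic_repr_nonneg)

lemma chain_value_le_one: "chain_value x \<le> 1"
  by (rule chain_value_le[OF dyadic_repr_one])

lemma chain_value_mem_le: "x \<in> U n \<Longrightarrow> chain_value x \<le> (1/2)^n"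
  by (rule chain_value_le[OF dyadic_repr_mem])

lemma chain_value_less_imp_mem: "chain_value x < (1/2)^n \<Longrightarrow> x \<in> U n"
  using cInf_lessD[OF dyadic_repr_nonempty] dyadic_repr_small unfolding chain_value_def
  by (metis less_eq_real_def mem_Collect_eq)

lemma chain_value_uminus: "chain_value (- x) = chain_value x"
proof -
  have "{s. dyadic_repr (- x) s} = {s. dyadic_repr x s}"
    using dyadic_repr_uminus[of x] dyadic_repr_uminus[of "- x"] by auto
  then show ?thesis unfolding chain_value_def by simp
qed

lemma chain_value_add: "chain_value (x + y) \<le> chain_value x + chain_value y"
proof -
  have "chain_value (x + y) - t \<le> chain_value x" if t: "dyadic_repr y t" for t
  proof -
    have "chain_value (x + y) - t \<le> s" if "dyadic_repr x s" for s
      using chain_value_le[OF dyadic_repr_add[OF that t]] by simp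
    then show ?thesis
      unfolding chain_value_def[of x] using dyadic_repr_nonempty by (intro cInf_greatest) auto
  qed
  then have "chain_value (x + y) - chain_value x \<le> chain_value y"
    unfolding chain_value_def[of y] using dyadic_repr_nonempty
    by (intro cInf_greatest) (auto simp: algebra_simps)
  then show ?thesis by simp
qed

lemma is_value_chain_value:
  assumes "(\<Inter>n. U n) \<subseteq> {0}"
  shows "is_value chain_value"
proof -
  have "x = 0" if "chain_value x = 0" for x
    using assms chain_value_less_imp_mem[of x] that by auto
  moreover have "chain_value 0 = 0"
    using chain_value_le[OF dyadic_repr_zero] chain_value_nonneg[of 0] by simp
  ultimately show ?thesis
    unfolding is_value_def using chain_value_nonneg chain_value_uminus chain_value_add by blast
qed

end

lemma chain_value_small_near_zero:
  fixes U :: "nat \<Rightarrow> 'a::topological_ab_group_add set"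
  assumes "halving_chain U" "\<And>n. open (U n)" "e > 0"
  shows "\<exists>W. open W \<and> 0 \<in> W \<and> (\<forall>w\<in>W. halving_chain.chain_value U w < e)"
proof -
  interpret halving_chain U by fact
  obtain n where "(1/2::real)^n < e" using real_arch_pow_inv[OF \<open>e > 0\<close>, of "1/2"] by auto
  then have "\<forall>w\<in>U n. chain_value w < e" using chain_value_mem_le le_less_trans by blast
  then show ?thesis using assms(2) zero_mem by blast
qed

lemma chain_value_small_imp_mem:
  fixes U :: "nat \<Rightarrow> 'a::topological_ab_group_add set"
  assumes "halving_chain U" "\<And>V. open V \<Longrightarrow> 0 \<in> V \<Longrightarrow> \<exists>n. U n \<subseteq> V"
    and "open V" "0 \<in> V"
  shows "\<exists>e>0. \<forall>x. halving_chain.chain_value U x < e \<longrightarrow> x \<in> V"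
proof -
  interpret halving_chain U by fact
  obtain n where "U n \<subseteq> V" using assms(2-4) by blast
  then show ?thesis using chain_value_less_imp_mem by (intro exI[of _ "(1/2)^n"]) auto
qed

lemma pseudovector_action_zero_right:
  "pseudovector_action act \<Longrightarrow> t \<ge> 0 \<Longrightarrow> act t 0 = 0"
  unfolding pseudovector_action_def by (metis add_cancel_right_right)

lemma pseudovector_action_uminus:
  "pseudovector_action act \<Longrightarrow> t \<ge> 0 \<Longrightarrow> act t (- x) = - act t x"
  using pseudovector_action_zero_right[of act t]
  unfolding pseudovector_action_def by (metis add.right_inverse minus_unique)

definition subnormalize ::
    "(real \<Rightarrow> 'a::ab_group_add \<Rightarrow> 'a) \<Rightarrow> ('a \<Rightarrow> real) \<Rightarrow> 'a \<Rightarrow> real" where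
  "subnormalize act p x = (SUP t\<in>{0..}. p (act t x) / max t 1)"

context
  fixes act :: "real \<Rightarrow> 'a::ab_group_add \<Rightarrow> 'a" and p :: "'a \<Rightarrow> real"
  assumes act: "pseudovector_action act" and p: "is_value p" and p_le_one: "\<And>x. p x \<le> 1"
begin

lemma subnormalize_ge: "t \<ge> 0 \<Longrightarrow> p (act t x) / max t 1 \<le> subnormalize act p x"
  unfolding subnormalize_def
proof (rule cSUP_upper)
  have "p y / max t 1 \<le> 1" for y t
    using p_le_one[of y] p unfolding is_value_def by (simp add: divide_le_eq max_def)
  then show "bdd_above ((\<lambda>t. p (act t x) / max t 1) ` {0..})" by (intro bdd_aboveI[of _ 1]) auto
qed simp

lemma subnormalize_le:
  "(\<And>t. t \<ge> 0 \<Longrightarrow> p (act t x) / max t 1 \<le> c) \<Longrightarrow> subnormalize act p x \<le> c"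
  unfolding subnormalize_def by (rule cSUP_least) auto

lemma value_le_subnormalize: "p x \<le> subnormalize act p x"
  using subnormalize_ge[of 1 x] act unfolding pseudovector_action_def by simp

lemma subnormalize_act_le: "s \<ge> 0 \<Longrightarrow> subnormalize act p (act s x) \<le> max s 1 * subnormalize act p x"
proof (rule subnormalize_le)
  fix t :: real assume s: "s \<ge> 0" and t: "t \<ge> 0"
  have "p (act (t * s) x) \<le> subnormalize act p x * max (t * s) 1"
    using subnormalize_ge[of "t * s" x] s t by (simp add: divide_le_eq)
  also have "\<dots> \<le> subnormalize act p x * (max t 1 * max s 1)"
  proof (rule mult_left_mono)
    have "t * s \<le> max t 1 * max s 1" "1 \<le> max t 1 * max s 1"
      using s t mult_mono[of 1 "max t 1" 1 "max s 1"] by (auto intro: mult_mono)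
    then show "max (t * s) 1 \<le> max t 1 * max s 1" by simp
    show "0 \<le> subnormalize act p x"
      using p value_le_subnormalize[of x] unfolding is_value_def by (meson order_trans)
  qed
  finally have "p (act (t * s) x) \<le> subnormalize act p x * (max t 1 * max s 1)" .
  moreover have "act t (act s x) = act (t * s) x"
    using act s t unfolding pseudovector_action_def by simp
  ultimately show "p (act t (act s x)) / max t 1 \<le> max s 1 * subnormalize act p x"
    by (simp add: divide_le_eq mult_ac)
qed

lemma is_subnorm_subnormalize: "is_subnorm act (subnormalize act p)"
proof -
  let ?N = "subnormalize act p"
  have p0: "p 0 = 0" and p_nonneg: "p x \<ge> 0" for x using p by (auto simp: is_value_def)
  have nonneg: "0 \<le> ?N x" for x using value_le_subnormalize p_nonneg order_trans by blast
  have "?N 0 \<le> 0"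
    by (rule subnormalize_le) (simp add: pseudovector_action_zero_right[OF act] p0)
  moreover have "?N x = 0 \<Longrightarrow> x = 0" for x
    using value_le_subnormalize[of x] p p_nonneg[of x] unfolding is_value_def by force
  ultimately have zero: "?N x = 0 \<longleftrightarrow> x = 0" for x using nonneg[of 0] by force
  have "?N (- x) \<le> ?N x" for x
    by (rule subnormalize_le)
      (use subnormalize_ge p in \<open>auto simp: pseudovector_action_uminus[OF act] is_value_def\<close>)
  then have uminus: "?N (- x) = ?N x" for x by (metis minus_minus order_antisym)
  have add: "?N (x + y) \<le> ?N x + ?N y" for x y
  proof (rule subnormalize_le)
    fix t :: real assume t: "t \<ge> 0"
    have "p (act t (x + y)) \<le> p (act t x) + p (act t y)"
      using act p t unfolding pseudovector_action_def is_value_def by simp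
    then have "p (act t (x + y)) / max t 1 \<le> p (act t x) / max t 1 + p (act t y) / max t 1"
      by (simp add: add_divide_distrib[symmetric] divide_right_mono)
    then show "p (act t (x + y)) / max t 1 \<le> ?N x + ?N y"
      using subnormalize_ge[OF t, of x] subnormalize_ge[OF t, of y] by linarith
  qed
  show ?thesis
    unfolding is_subnorm_def is_value_def using nonneg zero uminus add subnormalize_act_le by blast
qed

end

lemma value_diff_commute: "is_value p \<Longrightarrow> p (x - y) = p (y - x)"
  unfolding is_value_def by (metis minus_diff_eq)

lemma metric_space_value_metric: "is_value p \<Longrightarrow> Metric_space UNIV (value_metric p)"
proof
  fix x y z assume p: "is_value p"
  then show "0 \<le> value_metric p x y" "value_metric p x y = value_metric p y x"
    "value_metric p x y = 0 \<longleftrightarrow> x = y"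
    unfolding value_metric_def is_value_def by (auto simp: value_diff_commute[OF p])
  have "x - z = (x - y) + (y - z)" by simp
  then show "value_metric p x z \<le> value_metric p x y + value_metric p y z"
    using p unfolding value_metric_def is_value_def by metis
qed

lemma mtopology_value_metric_eq_euclidean:
  fixes p :: "'a::topological_ab_group_add \<Rightarrow> real"
  assumes p: "is_value p"
    and small: "\<And>e. e > 0 \<Longrightarrow> \<exists>W. open W \<and> 0 \<in> W \<and> (\<forall>w\<in>W. p w < e)"
    and base: "\<And>V. open V \<Longrightarrow> 0 \<in> V \<Longrightarrow> \<exists>e>0. \<forall>x. p x < e \<longrightarrow> x \<in> V"
  shows "Metric_space.mtopology UNIV (value_metric p) = euclidean"
proof -
  interpret M: Metric_space UNIV "value_metric p" by (rule metric_space_value_metric[OF p])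
  have mball: "M.mball x r = (\<lambda>y. y - x) -` {w. p w < r}" for x r
    by (auto simp: M.mball_def value_metric_def value_diff_commute[OF p])
  have "openin M.mtopology S \<longleftrightarrow> open S" for S
  proof
    assume S: "openin M.mtopology S"
    show "open S"
    proof (rule Topological_Spaces.openI)
      fix x assume "x \<in> S"
      then obtain r where r: "r > 0" "M.mball x r \<subseteq> S"
        using S unfolding M.openin_mtopology by blast
      then obtain W where W: "open W" "0 \<in> W" "\<forall>w\<in>W. p w < r" using small by blast
      have "open ((\<lambda>y. y - x) -` W)"
        using W(1) by (rule open_vimage) (rule continuous_intros)+
      moreover have "(\<lambda>y. y - x) -` W \<subseteq> S" using W(3) r(2) unfolding mball by auto
      ultimately show "\<exists>T. open T \<and> x \<in> T \<and> T \<subseteq> S" using W(2) by auto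
    qed
  next
    assume S: "open S"
    have "\<exists>r>0. M.mball x r \<subseteq> S" if "x \<in> S" for x
    proof -
      have "open ((\<lambda>w. x + w) -` S)"
        using S by (rule open_vimage) (rule continuous_intros)+
      moreover have "0 \<in> (\<lambda>w. x + w) -` S" using \<open>x \<in> S\<close> by simp
      ultimately obtain e where e: "e > 0" "\<forall>w. p w < e \<longrightarrow> x + w \<in> S"
        using base by blast
      have "M.mball x e \<subseteq> S"
      proof
        fix y assume "y \<in> M.mball x e"
        then have "x + (y - x) \<in> S" using e(2) unfolding mball by blast
        then show "y \<in> S" by simp
      qed
      then show ?thesis using e(1) by blast
    qed
    then show "openin M.mtopology S" unfolding M.openin_mtopology by blast
  qed
  then show ?thesis unfolding topology_eq by simp
qed

lemma subnormalize_small_near_zero: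
  fixes act :: "real \<Rightarrow> 'a::topological_ab_group_add \<Rightarrow> 'a"
  assumes act: "topological_pseudovector_action act" and p: "is_value p" "\<And>x. p x \<le> 1"
    and small: "\<And>e. e > 0 \<Longrightarrow> \<exists>W. open W \<and> 0 \<in> W \<and> (\<forall>w\<in>W. p w < e)"
    and "e > 0"
  shows "\<exists>W. open W \<and> 0 \<in> W \<and> (\<forall>w\<in>W. subnormalize act p w < e)"
proof -
  define c where "c = e / 2"
  define T where "T = 1 / c"
  have c: "0 < c" "c < e" and T: "0 < T" using \<open>e > 0\<close> by (auto simp: c_def T_def)
  have pva: "pseudovector_action act"
    and cont: "continuous_on ({0..} \<times> UNIV) (\<lambda>q. act (fst q) (snd q))"
    using act unfolding topological_pseudovector_action_def by auto
  have swap: "continuous_on (UNIV \<times> {0..}) (\<lambda>q::'a \<times> real. (snd q, fst q))"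
    by (intro continuous_on_Pair continuous_on_snd continuous_on_fst continuous_on_id)
  have cont': "continuous_on (UNIV \<times> {0..}) (\<lambda>q::'a \<times> real. act (snd q) (fst q))"
    using continuous_on_compose2[OF cont swap] by (simp add: image_subset_iff)
  obtain W where W: "open W" "0 \<in> W" "\<forall>w\<in>W. p w < c" using small c(1) by blast
  obtain A where A: "open A" "A \<inter> (UNIV \<times> {0..}) = (\<lambda>q. act (snd q) (fst q)) -` W \<inter> (UNIV \<times> {0..})"
    using cont'[unfolded continuous_on_open_invariant, rule_format, OF W(1)] by blast
  \<comment> \<open>Continuity of the action controls p (act t w) only for t in a compact range [0, T];
      for t > T the factor 1 / max t 1 does the job.\<close>
  have "{0} \<times> {0..T} \<subseteq> A" using A(2) W(2) pseudovector_action_zero_right[OF pva] by auto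
  then obtain X where X: "0 \<in> X" "open X" "X \<times> {0..T} \<subseteq> A"
    by (metis Elementary_Topology.tube_lemma[OF compact_Icc A(1)])
  have "subnormalize act p w \<le> c" if "w \<in> X" for w
  proof (rule subnormalize_le[OF pva p])
    fix t :: real assume t: "t \<ge> 0"
    show "p (act t w) / max t 1 \<le> c"
    proof (cases "t \<le> T")
      case True
      then have "(w, t) \<in> A \<inter> (UNIV \<times> {0..})" using X(3) \<open>w \<in> X\<close> t by auto
      then have "act t w \<in> W" using A(2) by auto
      then have "p (act t w) < c" using W(3) by blast
      have "0 \<le> p (act t w)" using p(1) unfolding is_value_def by blast
      then have "p (act t w) / max t 1 \<le> p (act t w)"
        by (simp add: divide_le_eq max_def mult_le_cancel_left1)
      with \<open>p (act t w) < c\<close> show ?thesis by linarith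
    next
      case False
      then have "1 / c < max t 1" unfolding T_def by simp
      then have "1 / max t 1 < c" using c(1) by (simp add: divide_less_eq mult.commute)
      moreover have "p (act t w) / max t 1 \<le> 1 / max t 1" using p(2) by (simp add: divide_right_mono)
      ultimately show ?thesis by linarith
    qed
  qed
  then show ?thesis
    using X(1,2) c(2) by (intro exI[of _ X]) (auto intro: order_le_less_trans)
qed

lemma mtopology_value_metric_subnormalize:
  fixes act :: "real \<Rightarrow> 'a::topological_ab_group_add \<Rightarrow> 'a"
  assumes act: "topological_pseudovector_action act" and p: "is_value p" "\<And>x. p x \<le> 1"
    and small: "\<And>e. e > 0 \<Longrightarrow> \<exists>W. open W \<and> 0 \<in> W \<and> (\<forall>w\<in>W. p w < e)"
    and base: "\<And>V. open V \<Longrightarrow> 0 \<in> V \<Longrightarrow> \<exists>e>0. \<forall>x. p x < e \<longrightarrow> x \<in> V"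
  shows "Metric_space.mtopology UNIV (value_metric (subnormalize act p)) = euclidean"
proof (rule mtopology_value_metric_eq_euclidean)
  have pva: "pseudovector_action act"
    using act unfolding topological_pseudovector_action_def by blast
  show "is_value (subnormalize act p)"
    using is_subnorm_subnormalize[OF pva p] unfolding is_subnorm_def by blast
  show "\<exists>W. open W \<and> 0 \<in> W \<and> (\<forall>w\<in>W. subnormalize act p w < e)" if "e > 0" for e
    by (rule subnormalize_small_near_zero[OF act p small that])
  show "\<exists>e>0. \<forall>x. subnormalize act p x < e \<longrightarrow> x \<in> V" if "open V" "0 \<in> V" for V
    using base[OF that] value_le_subnormalize[OF pva p] by (meson le_less_trans)
qed

lemma exists_symmetric_half_nbhd:
  fixes V :: "'a::topological_ab_group_add set"
  assumes "open V" "0 \<in> V"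
  shows "\<exists>W. open W \<and> 0 \<in> W \<and> (\<forall>w\<in>W. - w \<in> W) \<and> (\<forall>a\<in>W. \<forall>b\<in>W. a + b \<in> V)"
proof -
  have "open ((\<lambda>z::'a \<times> 'a. fst z + snd z) -` V)"
    using assms(1) by (rule open_vimage) (rule continuous_intros)+
  moreover have "(0, 0) \<in> (\<lambda>z::'a \<times> 'a. fst z + snd z) -` V" using assms(2) by simp
  ultimately obtain A B where AB: "open A" "open B" "(0, 0) \<in> A \<times> B"
    "A \<times> B \<subseteq> (\<lambda>z. fst z + snd z) -` V"
    by (rule open_prod_elim)
  define W where "W = (A \<inter> B) \<inter> uminus -` (A \<inter> B)"
  have "open (uminus -` (A \<inter> B))"
    using AB(1,2) continuous_on_minus[OF continuous_on_id] by (intro open_vimage open_Int) auto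
  then have "open W" using AB(1,2) unfolding W_def by auto
  moreover have "0 \<in> W" "\<forall>w\<in>W. - w \<in> W" using AB(3) unfolding W_def by auto
  moreover have "\<forall>a\<in>W. \<forall>b\<in>W. a + b \<in> V" using AB(4) unfolding W_def by auto
  ultimately show ?thesis by blast
qed

definition half_nbhd :: "'a::topological_ab_group_add set \<Rightarrow> 'a set" where
  "half_nbhd V =
     (SOME W. open W \<and> 0 \<in> W \<and> (\<forall>w\<in>W. - w \<in> W) \<and> (\<forall>a\<in>W. \<forall>b\<in>W. a + b \<in> V))"

lemma half_nbhd:
  assumes "open V" "0 \<in> V"
  shows "open (half_nbhd V)" "0 \<in> half_nbhd V" "\<forall>w\<in>half_nbhd V. - w \<in> half_nbhd V"
    "\<forall>a\<in>half_nbhd V. \<forall>b\<in>half_nbhd V. a + b \<in> V"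
proof -
  have "open (half_nbhd V) \<and> 0 \<in> half_nbhd V \<and> (\<forall>w\<in>half_nbhd V. - w \<in> half_nbhd V) \<and>
      (\<forall>a\<in>half_nbhd V. \<forall>b\<in>half_nbhd V. a + b \<in> V)"
    unfolding half_nbhd_def by (rule someI_ex) (rule exists_symmetric_half_nbhd[OF assms])
  then show "open (half_nbhd V)" "0 \<in> half_nbhd V" "\<forall>w\<in>half_nbhd V. - w \<in> half_nbhd V"
    "\<forall>a\<in>half_nbhd V. \<forall>b\<in>half_nbhd V. a + b \<in> V" by simp_all
qed

lemma half_nbhd_subset: "open V \<Longrightarrow> 0 \<in> V \<Longrightarrow> half_nbhd V \<subseteq> V"
  using half_nbhd(2,4) by (metis add.right_neutral subsetI)

lemma exists_halving_chain:
  fixes B :: "nat \<Rightarrow> 'a::topological_ab_group_add set"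
  assumes B: "\<And>k. open (B k)" "\<And>k. 0 \<in> B k"
    and base: "\<And>V. open V \<Longrightarrow> 0 \<in> V \<Longrightarrow> \<exists>k. B k \<subseteq> V"
    and sep: "(\<Inter>k. B k) \<subseteq> {0}"
  obtains U :: "nat \<Rightarrow> 'a set" where "halving_chain U" "\<And>n. open (U n)"
    "\<And>V. open V \<Longrightarrow> 0 \<in> V \<Longrightarrow> \<exists>n. U n \<subseteq> V"
    "(\<Inter>n. U n) \<subseteq> {0}"
proof -
  define U where "U = rec_nat UNIV (\<lambda>n V. half_nbhd (V \<inter> B n))"
  have U_0: "U 0 = UNIV" and U_Suc: "U (Suc n) = half_nbhd (U n \<inter> B n)" for n
    by (simp_all add: U_def)
  have U: "open (U n) \<and> 0 \<in> U n" for n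
  proof (induction n)
    case (Suc n)
    then show ?case using B half_nbhd(1,2)[of "U n \<inter> B n"] by (simp add: U_Suc open_Int)
  qed (simp add: U_0)
  then have nbhd: "open (U n \<inter> B n)" "0 \<in> U n \<inter> B n" for n using B by auto
  have U_Suc_subset: "U (Suc n) \<subseteq> B n" for n
    using half_nbhd_subset[OF nbhd] unfolding U_Suc by blast
  have "halving_chain U"
  proof
    show "- x \<in> U n" if "x \<in> U n" for x n
    proof (cases n)
      case (Suc m)
      then show ?thesis using that half_nbhd(3)[OF nbhd[of m]] by (simp add: U_Suc)
    qed (simp add: U_0)
    show "x + y \<in> U n" if "x \<in> U (Suc n)" "y \<in> U (Suc n)" for x y n
      using that half_nbhd(4)[OF nbhd] unfolding U_Suc by blast
  qed (simp_all add: U_0 U)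
  moreover have "\<exists>n. U n \<subseteq> V" if V: "open V" "0 \<in> V" for V
  proof -
    obtain k where "B k \<subseteq> V" using base[OF V] by blast
    then show ?thesis using U_Suc_subset[of k] by blast
  qed
  moreover have "(\<Inter>n. U n) \<subseteq> {0}"
  proof -
    have "(\<Inter>n. U n) \<subseteq> (\<Inter>k. B k)" using U_Suc_subset by blast
    then show ?thesis using sep by (rule order_trans)
  qed
  ultimately show ?thesis using U by (intro that[of U]) auto
qed

lemma metrizable_countable_nbhd_base:
  fixes a :: "'a::topological_space"
  assumes "metrizable_space (euclidean :: 'a topology)"
  obtains B :: "nat \<Rightarrow> 'a set" where "\<And>k. open (B k)" "\<And>k. a \<in> B k"
    "\<And>V. open V \<Longrightarrow> a \<in> V \<Longrightarrow> \<exists>k. B k \<subseteq> V" "(\<Inter>k. B k) \<subseteq> {a}"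
proof -
  obtain M d where "Metric_space M d" and top: "(euclidean :: 'a topology) = Metric_space.mtopology M d"
    using assms unfolding metrizable_space_def by blast
  interpret Metric_space M d by fact
  have opn: "open V \<longleftrightarrow> openin mtopology V" for V by (simp add: top[symmetric])
  have "M = UNIV" using topspace_mtopology by (simp add: top[symmetric])
  then have "a \<in> M" by simp
  define B where "B k = mball a (inverse (real (Suc k)))" for k
  have "open (B k)" "a \<in> B k" for k using \<open>a \<in> M\<close> by (simp_all add: opn B_def)
  moreover have "\<exists>k. B k \<subseteq> V" if V: "open V" "a \<in> V" for V
  proof -
    obtain r where r: "r > 0" "mball a r \<subseteq> V" using V unfolding opn openin_mtopology by blast
    obtain k where "inverse (real (Suc k)) < r" using reals_Archimedean[OF r(1)] by blast
    then have "B k \<subseteq> mball a r" unfolding B_def by (intro mball_subset_concentric) simp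
    then show ?thesis using r(2) by blast
  qed
  moreover have "x = a" if x: "\<forall>k. x \<in> B k" for x
  proof (rule ccontr)
    assume "x \<noteq> a"
    then have "d a x > 0" using \<open>M = UNIV\<close> by simp
    then obtain k where "inverse (real (Suc k)) < d a x" using reals_Archimedean by blast
    with x show False by (auto simp: B_def dest: spec[of _ k])
  qed
  ultimately show ?thesis by (intro that[of B]) auto
qed

theorem proposition6p4:
  fixes act :: "real \<Rightarrow> 'a::topological_ab_group_add \<Rightarrow> 'a"
  assumes "topological_pseudovector_action act"
    and "metrizable_space (euclidean :: 'a topology)"
  shows "\<exists>nrm. is_subnorm act nrm \<and>
           Metric_space.mtopology UNIV (value_metric nrm) = (euclidean :: 'a topology)"
proof -
  have act: "pseudovector_action act"
    using assms(1) unfolding topological_pseudovector_action_def by blast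
  obtain B :: "nat \<Rightarrow> 'a set" where B: "\<And>k. open (B k)" "\<And>k. 0 \<in> B k"
    "\<And>V. open V \<Longrightarrow> 0 \<in> V \<Longrightarrow> \<exists>k. B k \<subseteq> V" "(\<Inter>k. B k) \<subseteq> {0}"
    using metrizable_countable_nbhd_base[OF assms(2)] by metis
  obtain U :: "nat \<Rightarrow> 'a set" where U: "halving_chain U" "\<And>n. open (U n)"
    "\<And>V. open V \<Longrightarrow> 0 \<in> V \<Longrightarrow> \<exists>n. U n \<subseteq> V" "(\<Inter>n. U n) \<subseteq> {0}"
    using exists_halving_chain[OF B] by metis
  interpret halving_chain U by (fact U)
  have p: "is_value chain_value" by (rule is_value_chain_value[OF U(4)])
  have "is_subnorm act (subnormalize act chain_value)"
    by (rule is_subnorm_subnormalize[OF act p chain_value_le_one])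
  moreover have "Metric_space.mtopology UNIV (value_metric (subnormalize act chain_value)) = euclidean"
    by (rule mtopology_value_metric_subnormalize[OF assms(1) p chain_value_le_one
          chain_value_small_near_zero[OF U(1,2)] chain_value_small_imp_mem[OF U(1,3)]])
  ultimately show ?thesis by blast
qed

end
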